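(* Let $W_{max}$ be the maximum weight assigned to a vertex. The population size of DEMO on the weighted vertex cover problem is at all times upper bounded by $O\big(n(\log n+\log W_{max})\big)$.
   Context: Weighted vertex cover: $G=(V,E)$, $V=\{v_1,\dots,v_n\}$, $w:V\to\mathbb{N}^+$. Search points $x\in\{0,1\}^n$; $Cost(x)=\sum_i w(v_i)x_i$; $G(x)=(V(x),E(x))$ with $V(x)=V\setminus\{v_i:x_i=1\}$, $E(x)$ = edges with no selected endpoint; $LP(x)$ = optimal value of: minimize $\sum_{v_i\in V(x)}w(v_i)y_i$ s.t. $y_i+y_j\ge1$ for $\{v_i,v_j\}\in E(x)$, $0\le y_i\le1$. $f(x)=(Cost(x),LP(x))$, $f(x)\le f(y)$ componentwise. DEMO: $\delta=\frac1{2n}$, $b_1(x)=\lceil\log_{1+\delta}(1+Cost(x))\rceil$, $b_2(x)=\lceil\log_{1+\delta}(1+LP(x))\rceil$, $b=(b_1,b_2)$. Start with uniformly random $x$, $P=\{x\}$. Each iteration: choose $x\in P$ uniformly; create $x'$ by flipping each bit independently with probability $1/n$; if some $y\in P$ satisfies ($f(y)\le f(x')$ and $f(y)\ne f(x')$) or ($b(y)=b(x')$ and $Cost(y)+2LP(y)\le Cost(x')+2LP(x')$), discard $x'$; otherwise add $x'$ and delete all other $z\in P$ with $f(x')\le f(z)$ or $b(z)=b(x')$. *)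

theory Defs
  imports Complex_Main
begin

(* Instance: n vertices v_0..v_{n-1} (0-indexed), weights w :: nat => nat,
   undirected edge set E :: nat set set. Search points: bool lists of length n. *)

definition wvc_graph :: "nat \<Rightarrow> (nat \<Rightarrow> nat) \<Rightarrow> nat set set \<Rightarrow> bool" where
  "wvc_graph n w E \<longleftrightarrow>
     (\<forall>e\<in>E. \<exists>i j. e = {i, j} \<and> i \<noteq> j \<and> i < n \<and> j < n) \<and> (\<forall>i<n. w i > 0)"

definition Cost :: "nat \<Rightarrow> (nat \<Rightarrow> nat) \<Rightarrow> bool list \<Rightarrow> nat" where
  "Cost n w x = (\<Sum>i<n. w i * (if x ! i then 1 else 0))"

definition Vx :: "nat \<Rightarrow> bool list \<Rightarrow> nat set" where
  "Vx n x = {i. i < n \<and> \<not> x ! i}"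

definition Ex :: "nat set set \<Rightarrow> bool list \<Rightarrow> nat set set" where
  "Ex E x = {e \<in> E. \<forall>v\<in>e. \<not> x ! v}"

definition LP_feasible :: "nat \<Rightarrow> nat set set \<Rightarrow> bool list \<Rightarrow> (nat \<Rightarrow> real) \<Rightarrow> bool" where
  "LP_feasible n E x y \<longleftrightarrow>
     (\<forall>i \<in> Vx n x. 0 \<le> y i \<and> y i \<le> 1) \<and>
     (\<forall>i j. {i, j} \<in> Ex E x \<longrightarrow> y i + y j \<ge> 1)"

definition LP :: "nat \<Rightarrow> (nat \<Rightarrow> nat) \<Rightarrow> nat set set \<Rightarrow> bool list \<Rightarrow> real" where
  "LP n w E x = Inf ((\<lambda>y. \<Sum>i\<in>Vx n x. real (w i) * y i) ` {y. LP_feasible n E x y})"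

definition dominates :: "nat \<Rightarrow> (nat \<Rightarrow> nat) \<Rightarrow> nat set set \<Rightarrow> bool list \<Rightarrow> bool list \<Rightarrow> bool" where
  "dominates n w E y x \<longleftrightarrow>
     Cost n w y \<le> Cost n w x \<and> LP n w E y \<le> LP n w E x \<and>
     (Cost n w y \<noteq> Cost n w x \<or> LP n w E y \<noteq> LP n w E x)"

definition weakly_dom :: "nat \<Rightarrow> (nat \<Rightarrow> nat) \<Rightarrow> nat set set \<Rightarrow> bool list \<Rightarrow> bool list \<Rightarrow> bool" where
  "weakly_dom n w E x z \<longleftrightarrow> Cost n w x \<le> Cost n w z \<and> LP n w E x \<le> LP n w E z"

definition demo_delta :: "nat \<Rightarrow> real" where
  "demo_delta n = 1 / (2 * real n)"

definition box :: "nat \<Rightarrow> (nat \<Rightarrow> nat) \<Rightarrow> nat set set \<Rightarrow> bool list \<Rightarrow> int \<times> int" where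
  "box n w E x =
     (\<lceil>log (1 + demo_delta n) (1 + real (Cost n w x))\<rceil>,
      \<lceil>log (1 + demo_delta n) (1 + LP n w E x)\<rceil>)"

definition demo_rejects :: "nat \<Rightarrow> (nat \<Rightarrow> nat) \<Rightarrow> nat set set \<Rightarrow> bool list set \<Rightarrow> bool list \<Rightarrow> bool" where
  "demo_rejects n w E P x' \<longleftrightarrow>
     (\<exists>y\<in>P. dominates n w E y x' \<or>
        (box n w E y = box n w E x' \<and>
         real (Cost n w y) + 2 * LP n w E y \<le> real (Cost n w x') + 2 * LP n w E x'))"

(* One DEMO iteration: x is selected from P, x' is an offspring (any bit string of
   length n has positive probability under standard bit mutation when n >= 2). *)
definition demo_update :: "nat \<Rightarrow> (nat \<Rightarrow> nat) \<Rightarrow> nat set set \<Rightarrow> bool list set \<Rightarrow> bool list \<Rightarrow> bool list set" where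
  "demo_update n w E P x' =
     (if demo_rejects n w E P x' then P
      else insert x' {z \<in> P. \<not> (weakly_dom n w E x' z \<or> box n w E z = box n w E x')})"

(* Populations that can occur (with positive probability) at some time of a DEMO run *)
inductive demo_reachable :: "nat \<Rightarrow> (nat \<Rightarrow> nat) \<Rightarrow> nat set set \<Rightarrow> bool list set \<Rightarrow> bool" for n w E where
  init: "length x = n \<Longrightarrow> demo_reachable n w E {x}"
| step: "demo_reachable n w E P \<Longrightarrow> x \<in> P \<Longrightarrow> length x' = n \<Longrightarrow>
         demo_reachable n w E (demo_update n w E P x')"

definition Wmax :: "nat \<Rightarrow> (nat \<Rightarrow> nat) \<Rightarrow> nat" where
  "Wmax n w = Max (w ` {..<n})"

end

theory Submission
  imports Defs
begin

text \<open>
  Any two members of a DEMO population are incomparable under weak dominance and lie in different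
  boxes. Ordered by increasing cost, the members have decreasing LP values, so the first box
  coordinate is nondecreasing and the second nonincreasing; hence the difference of the two box
  coordinates is injective on the population. Both coordinates lie in \<open>{0..K}\<close>, where
  \<open>K\<close> is the ceiling of \<open>log (1 + \<delta>) (1 + n W\<^sub>m\<^sub>a\<^sub>x)\<close>, and
  \<open>ln (1 + \<delta>) \<ge> \<delta>/2 = 1/(4n)\<close> makes \<open>2K + 1 = O(n (log n + log W\<^sub>m\<^sub>a\<^sub>x))\<close>.
\<close>

lemma card_le_by_box_diagonals:
  fixes f :: "'a \<Rightarrow> 'b::linorder" and g :: "'a \<Rightarrow> 'c::linorder" and bf bg :: "'a \<Rightarrow> int"
  assumes antichain: "\<And>y z. y \<in> P \<Longrightarrow> z \<in> P \<Longrightarrow> f y \<le> f z \<Longrightarrow> g y \<le> g z \<Longrightarrow> y = z"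
    and boxes_distinct: "\<And>y z. y \<in> P \<Longrightarrow> z \<in> P \<Longrightarrow> bf y = bf z \<Longrightarrow> bg y = bg z \<Longrightarrow> y = z"
    and bf_mono: "\<And>y z. y \<in> P \<Longrightarrow> z \<in> P \<Longrightarrow> f y \<le> f z \<Longrightarrow> bf y \<le> bf z"
    and bg_mono: "\<And>y z. y \<in> P \<Longrightarrow> z \<in> P \<Longrightarrow> g y \<le> g z \<Longrightarrow> bg y \<le> bg z"
    and boxes_bounded: "\<And>y. y \<in> P \<Longrightarrow> bf y \<in> {0..K} \<and> bg y \<in> {0..K}"
  shows "card P \<le> nat (2 * K + 1)"
proof -
  define h where "h y = bf y - bg y" for y
  have ordered: "y = z" if "y \<in> P" "z \<in> P" "f y \<le> f z" "h y = h z" for y z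
  proof (rule ccontr)
    assume "y \<noteq> z"
    then have "g z \<le> g y" using antichain[OF \<open>y \<in> P\<close> \<open>z \<in> P\<close> \<open>f y \<le> f z\<close>] by fastforce
    then have "bf y \<le> bf z" "bg z \<le> bg y" using that bf_mono bg_mono by blast+
    then have "bf y = bf z" "bg y = bg z" using \<open>h y = h z\<close> by (auto simp: h_def)
    then show False using boxes_distinct \<open>y \<noteq> z\<close> that by blast
  qed
  have "inj_on h P"
  proof (rule inj_onI)
    fix y z assume "y \<in> P" "z \<in> P" "h y = h z"
    then show "y = z" using ordered[of y z] ordered[of z y] by (metis linorder_linear)
  qed
  moreover have "h ` P \<subseteq> {-K..K}" using boxes_bounded by (force simp: h_def)
  ultimately have "card P \<le> card {-K..K}" by (intro card_inj_on_le) auto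
  then show ?thesis by simp
qed

definition demo_antichain :: "nat \<Rightarrow> (nat \<Rightarrow> nat) \<Rightarrow> nat set set \<Rightarrow> bool list set \<Rightarrow> bool" where
  "demo_antichain n w E P \<longleftrightarrow> (\<forall>y\<in>P. \<forall>z\<in>P. y \<noteq> z \<longrightarrow>
      box n w E y \<noteq> box n w E z \<and> \<not> weakly_dom n w E y z)"

lemma not_weakly_dom_offspring:
  assumes "\<not> demo_rejects n w E P x'" "z \<in> P"
  shows "\<not> weakly_dom n w E z x'"
proof
  assume weak: "weakly_dom n w E z x'"
  have "\<not> dominates n w E z x'" using assms by (auto simp: demo_rejects_def)
  then have "Cost n w z = Cost n w x'" "LP n w E z = LP n w E x'"
    using weak by (auto simp: dominates_def weakly_dom_def)
  then show False using assms by (auto simp: demo_rejects_def box_def)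
qed

lemma demo_reachable_antichain:
  assumes "demo_reachable n w E P"
  shows "demo_antichain n w E P"
  using assms
proof (induction rule: demo_reachable.induct)
  case (init x)
  then show ?case by (simp add: demo_antichain_def)
next
  case (step P x x')
  show ?case
  proof (cases "demo_rejects n w E P x'")
    case True
    then show ?thesis using step.IH by (simp add: demo_update_def)
  next
    case False
    then show ?thesis
      using step.IH not_weakly_dom_offspring[OF False]
      by (auto simp: demo_update_def demo_antichain_def)
  qed
qed

lemma LP_nonneg: "0 \<le> LP n w E x"
  unfolding LP_def LP_feasible_def
  by (rule cInf_greatest) (auto intro!: sum_nonneg exI[of _ "\<lambda>_. 1"])

lemma LP_le_weight_sum: "LP n w E x \<le> (\<Sum>i\<in>Vx n x. real (w i))"
proof -
  have "LP_feasible n E x (\<lambda>_. 1)" by (simp add: LP_feasible_def)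
  moreover have "bdd_below ((\<lambda>y. \<Sum>i\<in>Vx n x. real (w i) * y i) ` {y. LP_feasible n E x y})"
    by (rule bdd_belowI[of _ 0]) (auto simp: LP_feasible_def intro!: sum_nonneg)
  ultimately show ?thesis
    unfolding LP_def by (auto intro!: cInf_lower[of "\<Sum>i\<in>Vx n x. real (w i)"] image_eqI)
qed

lemma le_Wmax: "i < n \<Longrightarrow> w i \<le> Wmax n w"
  unfolding Wmax_def by (rule Max_ge) auto

lemma Wmax_pos: "wvc_graph n w E \<Longrightarrow> 0 < n \<Longrightarrow> 0 < Wmax n w"
  using le_Wmax[of 0 n w] by (fastforce simp: wvc_graph_def)

lemma Cost_le_n_Wmax: "real (Cost n w x) \<le> real n * real (Wmax n w)"
proof -
  have "Cost n w x \<le> (\<Sum>i<n. Wmax n w)"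
    unfolding Cost_def by (rule sum_mono) (auto intro: le_Wmax)
  then show ?thesis by (simp flip: of_nat_mult)
qed

lemma LP_le_n_Wmax: "LP n w E x \<le> real n * real (Wmax n w)"
proof -
  have "(\<Sum>i\<in>Vx n x. real (w i)) \<le> (\<Sum>i\<in>Vx n x. real (Wmax n w))"
    by (rule sum_mono) (auto simp: Vx_def intro: le_Wmax)
  also have "\<dots> = real (card (Vx n x)) * real (Wmax n w)" by simp
  also have "\<dots> \<le> real n * real (Wmax n w)"
    using card_mono[of "{..<n}" "Vx n x"] by (intro mult_right_mono) (auto simp: Vx_def)
  finally show ?thesis using LP_le_weight_sum[of n w E x] by linarith
qed

lemma one_less_demo_base: "0 < n \<Longrightarrow> 1 < 1 + demo_delta n"
  by (simp add: demo_delta_def)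

lemma box_fst_mono:
  "0 < n \<Longrightarrow> Cost n w y \<le> Cost n w z \<Longrightarrow> fst (box n w E y) \<le> fst (box n w E z)"
  unfolding box_def using one_less_demo_base by (auto intro!: ceiling_mono log_mono)

lemma box_snd_mono:
  "0 < n \<Longrightarrow> LP n w E y \<le> LP n w E z \<Longrightarrow> snd (box n w E y) \<le> snd (box n w E z)"
  unfolding box_def using one_less_demo_base LP_nonneg[of n w E y]
  by (auto intro!: ceiling_mono log_mono)

lemma ceiling_log_one_plus_mem:
  fixes b t M :: real
  assumes "1 < b" "0 \<le> t" "t \<le> M"
  shows "\<lceil>log b (1 + t)\<rceil> \<in> {0..\<lceil>log b (1 + M)\<rceil>}"
proof -
  have "0 \<le> log b (1 + t)" using assms by simp
  moreover have "log b (1 + t) \<le> log b (1 + M)" using assms by (intro log_mono) auto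
  ultimately show ?thesis by (auto intro: ceiling_mono)
qed

lemma box_mem:
  assumes "0 < n"
  shows "fst (box n w E x) \<in> {0..\<lceil>log (1 + demo_delta n) (1 + real n * real (Wmax n w))\<rceil>}"
    and "snd (box n w E x) \<in> {0..\<lceil>log (1 + demo_delta n) (1 + real n * real (Wmax n w))\<rceil>}"
  unfolding box_def fst_conv snd_conv
  using one_less_demo_base[OF assms(1)] Cost_le_n_Wmax LP_nonneg LP_le_n_Wmax
  by (auto intro!: ceiling_log_one_plus_mem simp del: atLeastAtMost_iff)

lemma card_demo_population_le:
  assumes "demo_reachable n w E P" "0 < n"
  shows "real (card P) \<le> 2 * log (1 + demo_delta n) (1 + real n * real (Wmax n w)) + 3"
proof -
  define K where "K = \<lceil>log (1 + demo_delta n) (1 + real n * real (Wmax n w))\<rceil>"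
  have antichain: "demo_antichain n w E P"
    using assms(1) by (rule demo_reachable_antichain)
  have "card P \<le> nat (2 * K + 1)"
  proof (rule card_le_by_box_diagonals[where f = "Cost n w" and g = "LP n w E"
        and bf = "\<lambda>x. fst (box n w E x)" and bg = "\<lambda>x. snd (box n w E x)"])
    show "y = z" if "y \<in> P" "z \<in> P" "Cost n w y \<le> Cost n w z" "LP n w E y \<le> LP n w E z" for y z
      using antichain that by (auto simp: demo_antichain_def weakly_dom_def)
    show "y = z" if "y \<in> P" "z \<in> P" "fst (box n w E y) = fst (box n w E z)"
      "snd (box n w E y) = snd (box n w E z)" for y z
      using antichain that by (auto simp: demo_antichain_def prod_eq_iff)
  qed (use box_fst_mono box_snd_mono box_mem assms(2) K_def in auto)
  moreover have "0 \<le> log (1 + demo_delta n) (1 + real n * real (Wmax n w))"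
    using one_less_demo_base[OF assms(2)] by (simp add: add_pos_nonneg)
  then have "0 \<le> K" "K \<le> log (1 + demo_delta n) (1 + real n * real (Wmax n w)) + 1"
    unfolding K_def by linarith+
  ultimately show ?thesis by linarith
qed

lemma half_le_ln_one_plus:
  fixes d :: real
  assumes "0 \<le> d" "d \<le> 1/2"
  shows "d / 2 \<le> ln (1 + d)"
proof -
  have "d * d \<le> d * (1/2)" using assms by (intro mult_left_mono)
  then have "d / 2 \<le> d - d\<^sup>2" by (simp add: power2_eq_square)
  also have "\<dots> \<le> ln (1 + d)" using assms by (intro ln_one_plus_pos_lower_bound) auto
  finally show ?thesis .
qed

lemma log_demo_base_le:
  assumes "0 < n" "0 \<le> M"
  shows "log (1 + demo_delta n) (1 + M) \<le> 4 * real n * ln (1 + M)"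
proof -
  have "1 / (4 * real n) \<le> ln (1 + demo_delta n)"
    using half_le_ln_one_plus[of "demo_delta n"] assms by (simp add: demo_delta_def)
  moreover have "0 < 1 / (4 * real n)" using assms by simp
  moreover have "0 < ln (1 + demo_delta n)" using one_less_demo_base[OF assms(1)] by simp
  ultimately have "ln (1 + M) / ln (1 + demo_delta n) \<le> ln (1 + M) / (1 / (4 * real n))"
    using assms by (intro divide_left_mono) auto
  then show ?thesis by (simp add: log_def mult_ac)
qed

lemma ln_one_plus_mult_le:
  fixes m W :: real
  assumes "2 \<le> m" "1 \<le> W"
  shows "ln (1 + m * W) \<le> 2 * (ln m + ln W)"
proof -
  have "2 \<le> m * W" using mult_mono[of 2 m 1 W] assms by simp
  then have "ln (1 + m * W) \<le> ln (2 * (m * W))" by (intro ln_mono) linarith+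
  also have "\<dots> = ln 2 + ln m + ln W" using assms by (simp add: ln_mult)
  also have "\<dots> \<le> 2 * (ln m + ln W)"
  proof -
    have "ln 2 \<le> ln m" using assms by simp
    then show ?thesis using ln_ge_zero[OF assms(2)] by (simp add: algebra_simps)
  qed
  finally show ?thesis .
qed

theorem lemma6:
  "\<exists>C::real. \<forall>n w E P. n \<ge> 2 \<longrightarrow> wvc_graph n w E \<longrightarrow> demo_reachable n w E P \<longrightarrow>
      real (card P) \<le> C * real n * (ln (real n) + ln (real (Wmax n w)))"
proof (intro exI allI impI)
  fix n w E P
  assume n: "n \<ge> 2" and graph: "wvc_graph n w E" and reach: "demo_reachable n w E P"
  define W where "W = real (Wmax n w)"
  define T where "T = ln (real n) + ln W"
  have W: "1 \<le> W" using Wmax_pos[OF graph] n by (simp add: W_def)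
  have "1/4 \<le> ln (1 + 1/2 :: real)" using half_le_ln_one_plus[of "1/2"] by simp
  also have "\<dots> \<le> ln (real n)" using n by simp
  finally have "1/4 \<le> T" using ln_ge_zero[OF W] by (simp add: T_def)
  then have "1/2 \<le> real n * T" using n mult_mono[of 2 "real n" "1/4" T] by simp
  have "real (card P) \<le> 2 * log (1 + demo_delta n) (1 + real n * W) + 3"
    using card_demo_population_le[OF reach] n by (simp add: W_def)
  also have "\<dots> \<le> 8 * real n * ln (1 + real n * W) + 3"
    using log_demo_base_le[of n "real n * W"] n W by simp
  also have "\<dots> \<le> 16 * (real n * T) + 3"
    using ln_one_plus_mult_le[of "real n" W] n W by (simp add: T_def)
  also have "\<dots> \<le> 22 * real n * T" using \<open>1/2 \<le> real n * T\<close> by linarith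
  finally show "real (card P) \<le> 22 * real n * (ln (real n) + ln (real (Wmax n w)))"
    by (simp add: T_def W_def)
qed

end
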